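(* Let $\rho>r>0$ and $(x_0,y_0,\theta_0)\in\mathbb{R}^2\times[0,2\pi]$, and consider the optimal control problem (OCP) of finding the minimum time $t_f>0$ such that there is a trajectory $(x(\cdot),y(\cdot),\theta(\cdot))$ on $[0,t_f]$ of $\dot x=\cos\theta$, $\dot y=\sin\theta$, $\dot\theta=u/\rho$, $u(t)\in[-1,1]$, with $(x(0),y(0),\theta(0))=(x_0,y_0,\theta_0)$, $x(t_f)^2+y(t_f)^2=r^2$ and $x(t_f)\cos\theta(t_f)+y(t_f)\sin\theta(t_f)=0$. Then a path of type $C_1C_2C_3$ (feasible for the OCP) in which the target circle is internally tangent to $C_3$ cannot be optimal, i.e. cannot be a solution path of the OCP.
   Context: The target circle is the circle of radius $r$ centered at the origin. Type $C_1C_2C_3$ means the path is a concatenation of three circular arcs of radius $\rho$ with alternating turning directions ($RLR$ or $LRL$, where $R$ is a right/clockwise turn and $L$ a left/counter-clockwise turn). "The target circle is internally tangent to $C_3$" means the target circle touches the circle of radius $\rho$ containing $C_3$ from inside it. *)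

theory Defs
  imports "HOL-Analysis.Analysis"
begin

definition admissible ::
  "real \<Rightarrow> real \<Rightarrow> real \<Rightarrow> real \<Rightarrow> real \<Rightarrow>
   (real \<Rightarrow> real) \<Rightarrow> (real \<Rightarrow> real) \<Rightarrow> (real \<Rightarrow> real) \<Rightarrow> (real \<Rightarrow> real) \<Rightarrow> bool" where
  "admissible \<rho> x0 y0 \<theta>0 tf u X Y \<Theta> \<longleftrightarrow>
     tf > 0 \<and> u integrable_on {0..tf} \<and> (\<forall>t\<in>{0..tf}. \<bar>u t\<bar> \<le> 1) \<and>
     (\<forall>t\<in>{0..tf}.
        \<Theta> t = \<theta>0 + integral {0..t} u / \<rho> \<and>
        X t = x0 + integral {0..t} (\<lambda>s. cos (\<Theta> s)) \<and>
        Y t = y0 + integral {0..t} (\<lambda>s. sin (\<Theta> s)))"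

definition feasible ::
  "real \<Rightarrow> real \<Rightarrow> real \<Rightarrow> real \<Rightarrow> real \<Rightarrow> real \<Rightarrow>
   (real \<Rightarrow> real) \<Rightarrow> (real \<Rightarrow> real) \<Rightarrow> (real \<Rightarrow> real) \<Rightarrow> (real \<Rightarrow> real) \<Rightarrow> bool" where
  "feasible \<rho> r x0 y0 \<theta>0 tf u X Y \<Theta> \<longleftrightarrow>
     admissible \<rho> x0 y0 \<theta>0 tf u X Y \<Theta> \<and>
     (X tf)\<^sup>2 + (Y tf)\<^sup>2 = r\<^sup>2 \<and>
     X tf * cos (\<Theta> tf) + Y tf * sin (\<Theta> tf) = 0"

definition optimal ::
  "real \<Rightarrow> real \<Rightarrow> real \<Rightarrow> real \<Rightarrow> real \<Rightarrow> real \<Rightarrow>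
   (real \<Rightarrow> real) \<Rightarrow> (real \<Rightarrow> real) \<Rightarrow> (real \<Rightarrow> real) \<Rightarrow> (real \<Rightarrow> real) \<Rightarrow> bool" where
  "optimal \<rho> r x0 y0 \<theta>0 tf u X Y \<Theta> \<longleftrightarrow>
     feasible \<rho> r x0 y0 \<theta>0 tf u X Y \<Theta> \<and>
     (\<forall>tf' u' X' Y' \<Theta>'. feasible \<rho> r x0 y0 \<theta>0 tf' u' X' Y' \<Theta>' \<longrightarrow> tf \<le> tf')"

text \<open>Path of type C1C2C3 on [0,tf]: three nondegenerate circular arcs with
  alternating turning directions (RLR for s = -1, LRL for s = 1); u = s means
  left (counter-clockwise) turning when s = 1.\<close>
definition CCC_control :: "real \<Rightarrow> real \<Rightarrow> real \<Rightarrow> real \<Rightarrow> (real \<Rightarrow> real) \<Rightarrow> bool" where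
  "CCC_control s t1 t2 tf u \<longleftrightarrow>
     (s = 1 \<or> s = -1) \<and> 0 < t1 \<and> t1 < t2 \<and> t2 < tf \<and>
     (\<forall>t\<in>{0..tf}. u t = (if t < t1 then s else if t < t2 then - s else s))"

definition turn_center :: "real \<Rightarrow> real \<Rightarrow> real \<Rightarrow> real \<Rightarrow> real \<Rightarrow> real \<times> real" where
  "turn_center \<rho> s x y \<theta> = (x - s * \<rho> * sin \<theta>, y + s * \<rho> * cos \<theta>)"

end

(*
  Positions are complex numbers, and an LRL path is followed through the centres of its
  turning circles: switching between left and right turns at heading psi moves the centre
  by -2 i rho e^(i psi) or +2 i rho e^(i psi).  That the last circle is internally tangent
  to the target means that the last centre c lies at distance rho - r from the origin.

  If one of the last two arcs is at least a full turn, dropping the loop gives a shorter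
  path.  Otherwise, changing the duration of the second arc (or, if the third arc is a
  half turn, of the first one) by rho tau moves c to c + 2 i rho (e^(i tau) - 1) V with V
  not tangent to the circle |z| = rho - r; for the right sign of tau the new centre lies at
  a distance m from the origin with m - (rho - r) of order |tau|.  From there
  the target is reached by a shorter left arc followed by a right arc whose circle touches
  the target from outside.  The triangle with sides m, 2 rho and rho + r gives the turning
  angles, and the time saved, of order sqrt |tau|, beats the O(|tau|) cost of the
  perturbation.  If the last two arcs are both half turns, an explicit path made of a left
  arc, a quarter turn, a segment and a quarter turn is shorter.  RLR paths are mirror
  images of LRL paths.
*)

theory Submission
  imports Defs
begin

section \<open>Trigonometric and complex estimates\<close>

lemma sin_diff_le: "sin x - sin y \<le> \<bar>x - y\<bar>" for x y :: real
proof -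
  have "sin x - sin y = 2 * sin ((x - y) / 2) * cos ((x + y) / 2)" by (rule sin_diff_sin)
  also have "\<dots> \<le> 2 * \<bar>sin ((x - y) / 2)\<bar> * \<bar>cos ((x + y) / 2)\<bar>"
    by (metis abs_ge_self abs_mult abs_of_pos mult.assoc zero_less_numeral)
  also have "\<dots> \<le> 2 * \<bar>(x - y) / 2\<bar> * 1"
    by (intro mult_mono abs_sin_x_le_abs_x) auto
  finally show ?thesis by simp
qed

lemma sin_nonzero_between:
  fixes x :: real
  assumes "0 < x" and "x < 2 * pi" and "x \<noteq> pi"
  shows "sin x \<noteq> 0"
proof (cases "x < pi")
  case True
  then show ?thesis using assms(1) sin_gt_zero by force
next
  case False
  then show ?thesis using assms(2,3) sin_lt_zero by force
qed

lemma norm_cis_minus_one_le: "cmod (cis t - 1) \<le> \<bar>t\<bar>"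
proof -
  have "(cmod (cis t - 1))\<^sup>2 = 2 * (1 - cos t)"
    unfolding cmod_power2 by (simp add: power2_diff sin_squared_eq)
  also have "\<dots> = 4 * (sin (t / 2))\<^sup>2"
    using cos_double_sin[of "t / 2"] by simp
  also have "\<dots> \<le> 4 * (t / 2)\<^sup>2"
    using abs_sin_x_le_abs_x[of "t / 2"] by (simp only: abs_le_square_iff)
  finally have "(cmod (cis t - 1))\<^sup>2 \<le> \<bar>t\<bar>\<^sup>2" by (simp add: power_divide)
  then show ?thesis by (rule power2_le_imp_le) simp
qed

lemma cmod_add_power2: "(cmod (z + w))\<^sup>2 = (cmod z)\<^sup>2 + 2 * Re (cnj z * w) + (cmod w)\<^sup>2"
  unfolding cmod_power2 by (simp add: power2_eq_square algebra_simps)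

lemma Re_cnj_i_cis_mult_cis: "Re (cnj (\<i> * cis a) * cis b) = sin (b - a)"
  by (simp add: sin_diff algebra_simps)

lemma cis_arctan_ratio:
  assumes "0 < Re w"
  shows "cis (arctan (Im w / Re w)) = w / of_real (cmod w)"
proof -
  have "sqrt (1 + (Im w / Re w)\<^sup>2) = cmod w / Re w"
    using assms by (simp add: cmod_def real_sqrt_divide field_simps)
  moreover have "0 < cmod w" using assms complex_Re_le_cmod[of w] by linarith
  ultimately show ?thesis
    using assms by (intro complex_eqI) (simp_all add: cos_arctan sin_arctan)
qed

lemma abs_arctan_ratio_le:
  assumes "cmod (w - 1) < 1 / 2"
  shows "0 < Re w" and "\<bar>arctan (Im w / Re w)\<bar> \<le> 2 * cmod (w - 1)"
proof -
  have re: "1 / 2 < Re w" using abs_Re_le_cmod[of "w - 1"] assms by simp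
  then show "0 < Re w" by simp
  have "\<bar>arctan (Im w / Re w)\<bar> \<le> \<bar>Im w\<bar> / Re w"
    using abs_arctan_le[of "Im w / Re w"] re by simp
  also have "\<dots> \<le> cmod (w - 1) / (1 / 2)"
    using abs_Im_le_cmod[of "w - 1"] re by (intro frac_le) auto
  finally show "\<bar>arctan (Im w / Re w)\<bar> \<le> 2 * cmod (w - 1)" by simp
qed

lemma polar_relative_to:
  assumes "c = \<i> * of_real R * cis \<phi>" and "0 < R" and "0 < Re (z / c)"
  shows "z = \<i> * of_real (cmod z) * cis (\<phi> + arctan (Im (z / c) / Re (z / c)))"
proof -
  have "z \<noteq> 0" "c \<noteq> 0" using assms(3) by auto
  have "cmod (z / c) = cmod z / R" using assms(1,2) by (simp add: norm_divide norm_mult)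
  then have "of_real (cmod z) * cis (arctan (Im (z / c) / Re (z / c))) = of_real R * (z / c)"
    using assms(2,3) \<open>z \<noteq> 0\<close> by (simp add: cis_arctan_ratio)
  then show ?thesis
    using assms(1,2) \<open>c \<noteq> 0\<close> by (simp add: cis_mult[symmetric] field_simps)
qed

section \<open>Trajectories of piecewise constant controls\<close>

definition arc_displacement :: "real \<Rightarrow> real \<Rightarrow> real \<Rightarrow> real \<Rightarrow> complex" where
  "arc_displacement \<rho> \<theta> v d = (if v = 0 then of_real d * cis \<theta>
     else - \<i> * of_real (\<rho> / v) * (cis (\<theta> + v * d / \<rho>) - cis \<theta>))"

lemma arc_displacement_left: "arc_displacement \<rho> \<theta> 1 d = \<i> * of_real \<rho> * (cis \<theta> - cis (\<theta> + d / \<rho>))"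
  by (simp add: arc_displacement_def algebra_simps)

lemma arc_displacement_right:
  "arc_displacement \<rho> \<theta> (-1) d = \<i> * of_real \<rho> * (cis (\<theta> - d / \<rho>) - cis \<theta>)"
  by (simp add: arc_displacement_def)

lemma arc_displacement_straight: "arc_displacement \<rho> \<theta> 0 d = of_real d * cis \<theta>"
  by (simp add: arc_displacement_def)

lemma arc_integrals:
  assumes "\<rho> \<noteq> 0" and "a \<le> b"
  shows "((\<lambda>s. cos (\<theta> + v * (s - a) / \<rho>)) has_integral Re (arc_displacement \<rho> \<theta> v (b - a))) {a..b}"
    and "((\<lambda>s. sin (\<theta> + v * (s - a) / \<rho>)) has_integral Im (arc_displacement \<rho> \<theta> v (b - a))) {a..b}"
proof -
  have "((\<lambda>s. cos (\<theta> + v * (s - a) / \<rho>)) has_integral Re (arc_displacement \<rho> \<theta> v (b - a))) {a..b} \<and>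
        ((\<lambda>s. sin (\<theta> + v * (s - a) / \<rho>)) has_integral Im (arc_displacement \<rho> \<theta> v (b - a))) {a..b}"
  proof (cases "v = 0")
    case True
    then show ?thesis
      using has_integral_const_real[of "cos \<theta>" a b] has_integral_const_real[of "sin \<theta>" a b] assms(2)
      by (simp add: arc_displacement_def mult.commute)
  next
    case False
    have "((\<lambda>s. \<rho> / v * sin (\<theta> + v * (s - a) / \<rho>)) has_vector_derivative cos (\<theta> + v * (x - a) / \<rho>))
            (at x within {a..b})"
      and "((\<lambda>s. - (\<rho> / v) * cos (\<theta> + v * (s - a) / \<rho>)) has_vector_derivative sin (\<theta> + v * (x - a) / \<rho>))
            (at x within {a..b})" for x
      using False assms(1)
      by (auto intro!: derivative_eq_intros simp: has_real_derivative_iff_has_vector_derivative[symmetric])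
    from this[THEN fundamental_theorem_of_calculus[OF assms(2)]] False show ?thesis
      by (simp add: arc_displacement_def right_diff_distrib)
  qed
  then show "((\<lambda>s. cos (\<theta> + v * (s - a) / \<rho>)) has_integral Re (arc_displacement \<rho> \<theta> v (b - a))) {a..b}"
    and "((\<lambda>s. sin (\<theta> + v * (s - a) / \<rho>)) has_integral Im (arc_displacement \<rho> \<theta> v (b - a))) {a..b}"
    by auto
qed

lemma trajectory_append_arc:
  fixes u \<Theta> :: "real \<Rightarrow> real"
  assumes "\<rho> \<noteq> 0" and "0 \<le> a" "a \<le> b"
    and u_a: "(u has_integral I) {0..a}"
    and u_ab: "\<forall>t. a \<le> t \<and> t < b \<longrightarrow> u t = v"
    and \<Theta>: "\<forall>t\<in>{0..b}. \<Theta> t = \<theta>0 + integral {0..t} u / \<rho>"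
    and cos_a: "((\<lambda>s. cos (\<Theta> s)) has_integral C) {0..a}"
    and sin_a: "((\<lambda>s. sin (\<Theta> s)) has_integral S) {0..a}"
  shows "(u has_integral (I + v * (b - a))) {0..b}"
    and "\<Theta> b = \<Theta> a + v * (b - a) / \<rho>"
    and "((\<lambda>s. cos (\<Theta> s)) has_integral (C + Re (arc_displacement \<rho> (\<Theta> a) v (b - a)))) {0..b}"
    and "((\<lambda>s. sin (\<Theta> s)) has_integral (S + Im (arc_displacement \<rho> (\<Theta> a) v (b - a)))) {0..b}"
proof -
  have u_t: "(u has_integral (I + v * (t - a))) {0..t}" if "a \<le> t" "t \<le> b" for t
  proof -
    have const: "((\<lambda>t. v) has_integral (v * (t - a))) {a..t}"
      using has_integral_const_real[of v a t] that by (simp add: mult.commute)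
    have "(u has_integral (v * (t - a))) {a..t}"
    proof (rule has_integral_spike_finite[where S="{t}", OF _ _ const])
      fix x assume "x \<in> {a..t} - {t}"
      then show "u x = v" using u_ab that by auto
    qed simp
    then show ?thesis using has_integral_combine[OF \<open>0 \<le> a\<close> that(1) u_a] by simp
  qed
  then show "(u has_integral (I + v * (b - a))) {0..b}" using \<open>a \<le> b\<close> by simp
  have \<Theta>_t: "\<Theta> t = \<Theta> a + v * (t - a) / \<rho>" if "a \<le> t" "t \<le> b" for t
  proof -
    have "\<Theta> t = \<theta>0 + (I + v * (t - a)) / \<rho>"
      using \<Theta> that \<open>0 \<le> a\<close> integral_unique[OF u_t[OF that]] by simp
    moreover have "\<Theta> a = \<theta>0 + I / \<rho>"
      using \<Theta> that \<open>0 \<le> a\<close> integral_unique[OF u_a] by simp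
    ultimately show ?thesis by (simp add: add_divide_distrib)
  qed
  show "\<Theta> b = \<Theta> a + v * (b - a) / \<rho>" using \<Theta>_t[of b] \<open>a \<le> b\<close> by simp
  note arc = arc_integrals[OF \<open>\<rho> \<noteq> 0\<close> \<open>a \<le> b\<close>, of "\<Theta> a" v]
  have "((\<lambda>s. cos (\<Theta> s)) has_integral Re (arc_displacement \<rho> (\<Theta> a) v (b - a))) {a..b}"
  proof (rule has_integral_eq[OF _ arc(1)])
    fix s assume "s \<in> {a..b}"
    then show "cos (\<Theta> a + v * (s - a) / \<rho>) = cos (\<Theta> s)" using \<Theta>_t[of s] by simp
  qed
  from has_integral_combine[OF \<open>0 \<le> a\<close> \<open>a \<le> b\<close> cos_a this]
  show "((\<lambda>s. cos (\<Theta> s)) has_integral (C + Re (arc_displacement \<rho> (\<Theta> a) v (b - a)))) {0..b}" .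
  have "((\<lambda>s. sin (\<Theta> s)) has_integral Im (arc_displacement \<rho> (\<Theta> a) v (b - a))) {a..b}"
  proof (rule has_integral_eq[OF _ arc(2)])
    fix s assume "s \<in> {a..b}"
    then show "sin (\<Theta> a + v * (s - a) / \<rho>) = sin (\<Theta> s)" using \<Theta>_t[of s] by simp
  qed
  from has_integral_combine[OF \<open>0 \<le> a\<close> \<open>a \<le> b\<close> sin_a this]
  show "((\<lambda>s. sin (\<Theta> s)) has_integral (S + Im (arc_displacement \<rho> (\<Theta> a) v (b - a)))) {0..b}" .
qed

(* A piecewise constant control is the list of its pieces (control value, duration). *)
fun seg_control :: "(real \<times> real) list \<Rightarrow> real \<Rightarrow> real" where
  "seg_control [] t = 0"
| "seg_control ((v, d) # ps) t = (if t < d then v else seg_control ps (t - d))"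

fun seg_duration :: "(real \<times> real) list \<Rightarrow> real" where
  "seg_duration [] = 0"
| "seg_duration ((v, d) # ps) = d + seg_duration ps"

fun seg_turn :: "real \<Rightarrow> (real \<times> real) list \<Rightarrow> real" where
  "seg_turn \<rho> [] = 0"
| "seg_turn \<rho> ((v, d) # ps) = v * d / \<rho> + seg_turn \<rho> ps"

fun seg_displacement :: "real \<Rightarrow> real \<Rightarrow> (real \<times> real) list \<Rightarrow> complex" where
  "seg_displacement \<rho> \<theta> [] = 0"
| "seg_displacement \<rho> \<theta> ((v, d) # ps) = arc_displacement \<rho> \<theta> v d + seg_displacement \<rho> (\<theta> + v * d / \<rho>) ps"

lemma seg_duration_append [simp]: "seg_duration (ps @ qs) = seg_duration ps + seg_duration qs"
  by (induction ps) auto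

lemma seg_turn_append [simp]: "seg_turn \<rho> (ps @ qs) = seg_turn \<rho> ps + seg_turn \<rho> qs"
  by (induction ps) auto

lemma seg_displacement_append [simp]:
  "seg_displacement \<rho> \<theta> (ps @ qs) = seg_displacement \<rho> \<theta> ps + seg_displacement \<rho> (\<theta> + seg_turn \<rho> ps) qs"
  by (induction ps arbitrary: \<theta>) (auto simp: add_ac)

lemma seg_duration_nonneg: "\<forall>(v, d)\<in>set ps. 0 \<le> d \<Longrightarrow> 0 \<le> seg_duration ps"
  by (induction ps) auto

lemma seg_control_append:
  assumes "\<forall>(v, d)\<in>set ps. 0 \<le> d" and "0 \<le> t"
  shows "seg_control (ps @ qs) t =
    (if t < seg_duration ps then seg_control ps t else seg_control qs (t - seg_duration ps))"
  using assms
proof (induction ps arbitrary: t)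
  case (Cons p ps)
  then show ?case
    using seg_duration_nonneg[of ps] by (cases p) (auto simp: diff_diff_eq)
qed simp

lemma seg_trajectory:
  fixes u \<Theta> :: "real \<Rightarrow> real"
  assumes "\<rho> \<noteq> 0" and "\<forall>(v, d)\<in>set ps. 0 \<le> d"
    and "\<forall>t\<in>{0..<seg_duration ps}. u t = seg_control ps t"
    and "\<forall>t\<in>{0..seg_duration ps}. \<Theta> t = \<theta>0 + integral {0..t} u / \<rho>"
  shows "(u has_integral \<rho> * seg_turn \<rho> ps) {0..seg_duration ps} \<and>
    \<Theta> (seg_duration ps) = \<theta>0 + seg_turn \<rho> ps \<and>
    ((\<lambda>s. cos (\<Theta> s)) has_integral Re (seg_displacement \<rho> \<theta>0 ps)) {0..seg_duration ps} \<and>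
    ((\<lambda>s. sin (\<Theta> s)) has_integral Im (seg_displacement \<rho> \<theta>0 ps)) {0..seg_duration ps}"
  using assms(2-)
proof (induction ps rule: rev_induct)
  case Nil
  then show ?case by auto
next
  case (snoc p ps)
  obtain v d where p: "p = (v, d)" by fastforce
  let ?a = "seg_duration ps"
  have ps: "\<forall>(v, d)\<in>set ps. 0 \<le> d" and a: "0 \<le> ?a" "?a \<le> ?a + d"
    using snoc.prems(1) p by (auto simp: seg_duration_nonneg)
  have u: "u t = (if t < ?a then seg_control ps t else v)" if "0 \<le> t" "t < ?a + d" for t
    using snoc.prems(2) that by (simp add: p seg_control_append[OF ps])
  have "\<forall>t\<in>{0..<?a}. u t = seg_control ps t" "\<forall>t\<in>{0..?a}. \<Theta> t = \<theta>0 + integral {0..t} u / \<rho>"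
    using u a snoc.prems(3) by (auto simp: p)
  with ps have IH: "(u has_integral \<rho> * seg_turn \<rho> ps) {0..?a}" "\<Theta> ?a = \<theta>0 + seg_turn \<rho> ps"
    "((\<lambda>s. cos (\<Theta> s)) has_integral Re (seg_displacement \<rho> \<theta>0 ps)) {0..?a}"
    "((\<lambda>s. sin (\<Theta> s)) has_integral Im (seg_displacement \<rho> \<theta>0 ps)) {0..?a}"
    using snoc.IH by auto
  have u_v: "\<forall>t. ?a \<le> t \<and> t < ?a + d \<longrightarrow> u t = v" using u a by auto
  have \<Theta>: "\<forall>t\<in>{0..?a + d}. \<Theta> t = \<theta>0 + integral {0..t} u / \<rho>" using snoc.prems(3) by (simp add: p)
  note step = trajectory_append_arc[OF \<open>\<rho> \<noteq> 0\<close> a IH(1) u_v \<Theta> IH(3,4)]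
  have turn: "\<rho> * seg_turn \<rho> (ps @ [p]) = \<rho> * seg_turn \<rho> ps + v * (?a + d - ?a)"
    using \<open>\<rho> \<noteq> 0\<close> by (simp add: p distrib_left)
  have dur: "seg_duration (ps @ [p]) = ?a + d" by (simp add: p)
  have turn': "\<theta>0 + seg_turn \<rho> (ps @ [p]) = \<Theta> ?a + v * (?a + d - ?a) / \<rho>" by (simp add: p IH(2))
  have disp: "seg_displacement \<rho> \<theta>0 (ps @ [p]) = seg_displacement \<rho> \<theta>0 ps + arc_displacement \<rho> (\<Theta> ?a) v (?a + d - ?a)"
    by (simp add: p IH(2))
  show ?case
    unfolding dur turn turn' disp plus_complex.sel using step by blast
qed

lemma seg_control_bound: "\<forall>(v, d)\<in>set ps. \<bar>v\<bar> \<le> 1 \<Longrightarrow> \<bar>seg_control ps t\<bar> \<le> 1"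
  by (induction ps arbitrary: t) auto

lemma admissible_seg_endpoint:
  assumes "admissible \<rho> x0 y0 \<theta>0 (seg_duration ps) u X Y \<Theta>" and "\<rho> \<noteq> 0"
    and "\<forall>(v, d)\<in>set ps. 0 \<le> d" and "\<forall>t\<in>{0..<seg_duration ps}. u t = seg_control ps t"
  shows "\<Theta> (seg_duration ps) = \<theta>0 + seg_turn \<rho> ps"
    and "Complex (X (seg_duration ps)) (Y (seg_duration ps)) = Complex x0 y0 + seg_displacement \<rho> \<theta>0 ps"
proof -
  let ?T = "seg_duration ps"
  from assms(1) have \<Theta>: "\<forall>t\<in>{0..?T}. \<Theta> t = \<theta>0 + integral {0..t} u / \<rho>"
    and "X ?T = x0 + integral {0..?T} (\<lambda>s. cos (\<Theta> s))" "Y ?T = y0 + integral {0..?T} (\<lambda>s. sin (\<Theta> s))"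
    unfolding admissible_def by auto
  with seg_trajectory[OF assms(2-4) \<Theta>]
  show "\<Theta> ?T = \<theta>0 + seg_turn \<rho> ps" "Complex (X ?T) (Y ?T) = Complex x0 y0 + seg_displacement \<rho> \<theta>0 ps"
    by (auto simp: complex_eq_iff integral_unique)
qed

lemma seg_feasible:
  assumes "\<rho> \<noteq> 0" and "\<forall>(v, d)\<in>set ps. \<bar>v\<bar> \<le> 1 \<and> 0 \<le> d" and "0 < seg_duration ps"
    and "Complex x0 y0 + seg_displacement \<rho> \<theta>0 ps = - of_real r * \<i> * cis (\<theta>0 + seg_turn \<rho> ps)"
  shows "\<exists>u X Y \<Theta>. feasible \<rho> r x0 y0 \<theta>0 (seg_duration ps) u X Y \<Theta>"
proof -
  let ?T = "seg_duration ps"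
  define \<Theta> where "\<Theta> t = \<theta>0 + integral {0..t} (seg_control ps) / \<rho>" for t
  define X where "X t = x0 + integral {0..t} (\<lambda>s. cos (\<Theta> s))" for t
  define Y where "Y t = y0 + integral {0..t} (\<lambda>s. sin (\<Theta> s))" for t
  have durations: "\<forall>(v, d)\<in>set ps. 0 \<le> d" using assms(2) by auto
  have "seg_control ps integrable_on {0..?T}"
    using seg_trajectory[OF assms(1) durations, of "seg_control ps" \<Theta>] by (auto simp: \<Theta>_def)
  moreover have "\<forall>t\<in>{0..?T}. \<bar>seg_control ps t\<bar> \<le> 1"
    using assms(2) by (auto intro: seg_control_bound)
  ultimately have adm: "admissible \<rho> x0 y0 \<theta>0 ?T (seg_control ps) X Y \<Theta>"
    using assms(3) by (simp add: admissible_def \<Theta>_def X_def Y_def)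
  note endpoint = admissible_seg_endpoint[OF adm assms(1) durations]
  have "X ?T = r * sin (\<Theta> ?T)" "Y ?T = - r * cos (\<Theta> ?T)"
    using endpoint assms(4) by (simp_all add: complex_eq_iff)
  then have "(X ?T)\<^sup>2 + (Y ?T)\<^sup>2 = r\<^sup>2" "X ?T * cos (\<Theta> ?T) + Y ?T * sin (\<Theta> ?T) = 0"
    by (simp_all add: algebra_simps flip: distrib_left)
  with adm show ?thesis unfolding feasible_def by blast
qed

lemma arc_displacement_shift_turns:
  assumes "k \<in> \<int>"
  shows "arc_displacement \<rho> (\<theta> + 2 * pi * k) v d = arc_displacement \<rho> \<theta> v d"
proof -
  have "cis (\<theta> + 2 * pi * k + x) = cis (\<theta> + x)" for x
    using assms cis_mult[of "\<theta> + x" "2 * pi * k"] by (simp add: add_ac)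
  from this[of 0] this[of "v * d / \<rho>"] show ?thesis
    by (simp add: arc_displacement_def)
qed

lemma seg_displacement_shift_turns:
  assumes "k \<in> \<int>"
  shows "seg_displacement \<rho> (\<theta> + 2 * pi * k) ps = seg_displacement \<rho> \<theta> ps"
proof (induction ps arbitrary: \<theta>)
  case (Cons p ps)
  obtain v d where p: "p = (v, d)" by fastforce
  have shift: "\<theta> + 2 * pi * k + v * d / \<rho> = (\<theta> + v * d / \<rho>) + 2 * pi * k"
    by simp
  show ?case
    unfolding p seg_displacement.simps shift Cons.IH arc_displacement_shift_turns[OF assms] ..
qed simp

lemma seg_full_turn:
  assumes "v = 1 \<or> v = -1" and "\<rho> \<noteq> 0"
  shows "seg_displacement \<rho> \<theta> (ps @ (v, d + 2 * pi * \<rho>) # qs) = seg_displacement \<rho> \<theta> (ps @ (v, d) # qs)"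
    and "seg_turn \<rho> (ps @ (v, d + 2 * pi * \<rho>) # qs) = seg_turn \<rho> (ps @ (v, d) # qs) + 2 * pi * v"
proof -
  have turn: "\<theta>' + v * (d + 2 * pi * \<rho>) / \<rho> = (\<theta>' + v * d / \<rho>) + 2 * pi * v" for \<theta>'
    using assms(2) by (simp add: field_simps)
  have v: "v \<in> \<int>" "v \<noteq> 0" using assms(1) by auto
  have "cis (x + 2 * pi * v) = cis x" for x
    using v cis_mult[of x "2 * pi * v"] by simp
  then have "arc_displacement \<rho> \<theta>' v (d + 2 * pi * \<rho>) = arc_displacement \<rho> \<theta>' v d" for \<theta>'
    using v by (simp add: arc_displacement_def turn)
  then show "seg_displacement \<rho> \<theta> (ps @ (v, d + 2 * pi * \<rho>) # qs) = seg_displacement \<rho> \<theta> (ps @ (v, d) # qs)"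
    by (simp add: turn seg_displacement_shift_turns[OF v(1)])
  show "seg_turn \<rho> (ps @ (v, d + 2 * pi * \<rho>) # qs) = seg_turn \<rho> (ps @ (v, d) # qs) + 2 * pi * v"
    using turn[of 0] by simp
qed

section \<open>Angles of a triangle\<close>

definition triangle_sides :: "real \<Rightarrow> real \<Rightarrow> real \<Rightarrow> bool" where
  "triangle_sides a b c \<longleftrightarrow> 0 < a \<and> 0 < b \<and> 0 < c \<and> a \<le> b + c \<and> b \<le> a + c \<and> c \<le> a + b"

definition triangle_angle :: "real \<Rightarrow> real \<Rightarrow> real \<Rightarrow> real" where
  "triangle_angle a b c = arccos ((a\<^sup>2 + b\<^sup>2 - c\<^sup>2) / (2 * a * b))"

lemma triangle_sides_rotate: "triangle_sides a b c \<Longrightarrow> triangle_sides b c a"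
  by (auto simp: triangle_sides_def)

lemma triangle_cos_bounds:
  assumes "triangle_sides a b c"
  shows "-1 \<le> (a\<^sup>2 + b\<^sup>2 - c\<^sup>2) / (2 * a * b)" and "(a\<^sup>2 + b\<^sup>2 - c\<^sup>2) / (2 * a * b) \<le> 1"
proof -
  from assms have ab: "0 < 2 * a * b" and "\<bar>a - b\<bar> \<le> c" "c \<le> a + b" "0 < c"
    by (auto simp: triangle_sides_def)
  then have "(a - b)\<^sup>2 \<le> c\<^sup>2" "c\<^sup>2 \<le> (a + b)\<^sup>2"
    by (metis abs_le_square_iff abs_of_pos, intro power_mono) auto
  with ab show "-1 \<le> (a\<^sup>2 + b\<^sup>2 - c\<^sup>2) / (2 * a * b)" "(a\<^sup>2 + b\<^sup>2 - c\<^sup>2) / (2 * a * b) \<le> 1"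
    by (simp_all add: field_simps power2_eq_square)
qed

lemma cos_triangle_angle:
  "triangle_sides a b c \<Longrightarrow> cos (triangle_angle a b c) = (a\<^sup>2 + b\<^sup>2 - c\<^sup>2) / (2 * a * b)"
  using triangle_cos_bounds by (simp add: triangle_angle_def)

lemma triangle_angle_bounds:
  assumes "triangle_sides a b c"
  shows "0 \<le> triangle_angle a b c" and "triangle_angle a b c \<le> pi"
  using triangle_cos_bounds[OF assms] by (simp_all add: triangle_angle_def arccos_lbound arccos_ubound)

lemma sin_triangle_angle:
  assumes "triangle_sides a b c"
  shows "2 * a * b * sin (triangle_angle a b c) = sqrt (4 * a\<^sup>2 * b\<^sup>2 - (a\<^sup>2 + b\<^sup>2 - c\<^sup>2)\<^sup>2)"
proof -
  have ab: "0 < 2 * a * b" using assms by (simp add: triangle_sides_def)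
  have "\<bar>(a\<^sup>2 + b\<^sup>2 - c\<^sup>2) / (2 * a * b)\<bar> \<le> 1" using triangle_cos_bounds[OF assms] by linarith
  then have "2 * a * b * sin (triangle_angle a b c) = sqrt ((2 * a * b)\<^sup>2 * (1 - ((a\<^sup>2 + b\<^sup>2 - c\<^sup>2) / (2 * a * b))\<^sup>2))"
    using ab by (simp add: triangle_angle_def sin_arccos_abs real_sqrt_mult)
  also have "\<dots> = sqrt (4 * a\<^sup>2 * b\<^sup>2 - (a\<^sup>2 + b\<^sup>2 - c\<^sup>2)\<^sup>2)"
    using assms by (simp add: triangle_sides_def power_divide right_diff_distrib power_mult_distrib)
  finally show ?thesis .
qed

lemma law_of_sines:
  assumes "triangle_sides a b c"
  shows "a * sin (triangle_angle a b c) = c * sin (triangle_angle b c a)"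
proof -
  have "4 * a\<^sup>2 * b\<^sup>2 - (a\<^sup>2 + b\<^sup>2 - c\<^sup>2)\<^sup>2 = 4 * b\<^sup>2 * c\<^sup>2 - (b\<^sup>2 + c\<^sup>2 - a\<^sup>2)\<^sup>2"
    by (simp add: power2_eq_square algebra_simps)
  then have "b * (2 * a * sin (triangle_angle a b c)) = b * (2 * c * sin (triangle_angle b c a))"
    using sin_triangle_angle[OF assms] sin_triangle_angle[OF triangle_sides_rotate[OF assms]]
    by (simp add: algebra_simps)
  then show ?thesis using assms by (simp add: triangle_sides_def)
qed

lemma triangle_angle_cis:
  assumes "triangle_sides a b c"
  shows "of_real c * cis (- triangle_angle b c a) = of_real b - of_real a * cis (triangle_angle a b c)"
proof (rule complex_eqI)
  have pos: "0 < a" "0 < b" "0 < c" using assms by (auto simp: triangle_sides_def)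
  have "2 * b * (a * cos (triangle_angle a b c) + c * cos (triangle_angle b c a)) = 2 * b * b"
    using pos cos_triangle_angle[OF assms] cos_triangle_angle[OF triangle_sides_rotate[OF assms]]
    by (simp add: distrib_left) (simp add: field_simps power2_eq_square)
  then show "Re (of_real c * cis (- triangle_angle b c a)) = Re (of_real b - of_real a * cis (triangle_angle a b c))"
    using pos by simp
  show "Im (of_real c * cis (- triangle_angle b c a)) = Im (of_real b - of_real a * cis (triangle_angle a b c))"
    using law_of_sines[OF assms] by simp
qed

lemma triangle_angle_le:
  assumes "triangle_sides a b c" and "a \<le> c"
  shows "triangle_angle b c a \<le> triangle_angle a b c"
proof -
  have pos: "0 < a" "0 < b" "0 < c" and "b \<le> a + c" using assms by (auto simp: triangle_sides_def)
  then have "0 \<le> (c - a) * ((a + c)\<^sup>2 - b\<^sup>2)"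
    using assms(2) by (intro mult_nonneg_nonneg) (auto simp: power_mono)
  then have "(a\<^sup>2 + b\<^sup>2 - c\<^sup>2) / (2 * a * b) \<le> (b\<^sup>2 + c\<^sup>2 - a\<^sup>2) / (2 * b * c)"
    using pos by (simp add: divide_simps) (simp add: power2_eq_square algebra_simps)
  then show ?thesis
    using triangle_cos_bounds[OF assms(1)] triangle_cos_bounds[OF triangle_sides_rotate[OF assms(1)]]
    unfolding triangle_angle_def by (intro arccos_le_arccos) auto
qed

section \<open>Reaching the target by a left and a right arc\<close>

lemma tail_triangle_sides:
  "0 < r \<Longrightarrow> r < \<rho> \<Longrightarrow> \<rho> - r < m \<Longrightarrow> m \<le> \<rho> \<Longrightarrow> triangle_sides m (2 * \<rho>) (\<rho> + r)"
  by (simp add: triangle_sides_def)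

(* The left circle centred at i m e^(i theta) and the following right circle have centres
   2 rho apart, and the right circle touches the target from outside, so its centre is at
   distance rho + r from the origin: omega and beta are two angles of this triangle. *)
lemma tail_to_target:
  assumes "triangle_sides m (2 * \<rho>) (\<rho> + r)"
  defines "\<omega> \<equiv> triangle_angle m (2 * \<rho>) (\<rho> + r)" and "\<beta> \<equiv> triangle_angle (2 * \<rho>) (\<rho> + r) m"
  shows "\<i> * of_real m * cis \<theta> - 2 * \<i> * of_real \<rho> * cis (\<theta> - \<omega>) + \<i> * of_real \<rho> * cis (\<theta> - \<omega> - \<beta>)
       = - of_real r * \<i> * cis (\<theta> - \<omega> - \<beta>)"
proof -
  have closure: "of_real (\<rho> + r) * cis (- \<beta>) = of_real (2 * \<rho>) - of_real m * cis \<omega>"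
    using triangle_angle_cis[OF assms(1)] unfolding \<omega>_def \<beta>_def .
  have "cis \<theta> = cis (\<theta> - \<omega>) * cis \<omega>" "cis (\<theta> - \<omega> - \<beta>) = cis (\<theta> - \<omega>) * cis (- \<beta>)"
    by (simp_all add: cis_mult)
  then have "\<i> * of_real m * cis \<theta> - 2 * \<i> * of_real \<rho> * cis (\<theta> - \<omega>) + \<i> * of_real \<rho> * cis (\<theta> - \<omega> - \<beta>)
      + of_real r * \<i> * cis (\<theta> - \<omega> - \<beta>)
      = \<i> * cis (\<theta> - \<omega>) * (of_real m * cis \<omega> - of_real (2 * \<rho>) + of_real (\<rho> + r) * cis (- \<beta>))"
    by (simp add: algebra_simps)
  also have "\<dots> = 0" unfolding closure by simp
  finally show ?thesis by (simp add: algebra_simps eq_neg_iff_add_eq_0)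
qed

lemma sin_tail_angle_ge:
  assumes "0 < r" "r < \<rho>" "\<rho> - r < m" "m \<le> \<rho>"
  shows "sqrt ((m - (\<rho> - r)) / (2 * \<rho>)) \<le> sin (triangle_angle m (2 * \<rho>) (\<rho> + r))"
proof -
  let ?\<omega> = "triangle_angle m (2 * \<rho>) (\<rho> + r)"
  note T = tail_triangle_sides[OF assms]
  have m: "0 < m" using assms by linarith
  have cos: "cos ?\<omega> = (m\<^sup>2 + 4 * \<rho>\<^sup>2 - (\<rho> + r)\<^sup>2) / (4 * \<rho> * m)"
    using cos_triangle_angle[OF T] by (simp add: power_mult_distrib mult_ac)
  have "(\<rho> - r)\<^sup>2 \<le> m\<^sup>2" "0 \<le> 4 * \<rho> * (\<rho> - r)" using assms by (auto intro: power_mono)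
  moreover have "m\<^sup>2 + 4 * \<rho>\<^sup>2 - (\<rho> + r)\<^sup>2 = (m\<^sup>2 - (\<rho> - r)\<^sup>2) + 4 * \<rho> * (\<rho> - r)"
    by (simp add: power2_eq_square algebra_simps)
  ultimately have "0 \<le> m\<^sup>2 + 4 * \<rho>\<^sup>2 - (\<rho> + r)\<^sup>2" by linarith
  then have "0 \<le> cos ?\<omega>"
    unfolding cos using assms m by simp
  have "(m - (\<rho> - r)) / (2 * \<rho>) = (m - (\<rho> - r)) * (2 * \<rho>) / (4 * \<rho> * \<rho>)"
    using assms by (simp add: field_simps)
  also have "\<dots> \<le> (m - (\<rho> - r)) * (3 * \<rho> + r - m) / (4 * \<rho> * m)"
    using assms m by (intro frac_le mult_left_mono) auto
  also have "\<dots> = 1 - cos ?\<omega>"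
    unfolding cos using assms m by (simp add: field_simps power2_eq_square)
  also have "\<dots> \<le> (sin ?\<omega>)\<^sup>2"
  proof -
    have "cos ?\<omega> * cos ?\<omega> \<le> cos ?\<omega> * 1"
      using \<open>0 \<le> cos ?\<omega>\<close> by (intro mult_left_mono) auto
    then show ?thesis using sin_squared_eq[of ?\<omega>] unfolding power2_eq_square by linarith
  qed
  finally show ?thesis
    using triangle_angle_bounds[OF T] by (metis real_sqrt_le_mono real_sqrt_unique sin_ge_zero)
qed

lemma tail_angle_gain:
  assumes "0 < r" "r < \<rho>" "\<rho> - r < m" "m \<le> \<rho>"
  shows "r / (\<rho> + r) * sqrt ((m - (\<rho> - r)) / (2 * \<rho>))
    \<le> triangle_angle m (2 * \<rho>) (\<rho> + r) - triangle_angle (2 * \<rho>) (\<rho> + r) m"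
proof -
  let ?\<omega> = "triangle_angle m (2 * \<rho>) (\<rho> + r)" and ?\<beta> = "triangle_angle (2 * \<rho>) (\<rho> + r) m"
  note T = tail_triangle_sides[OF assms]
  have sines: "(\<rho> + r) * sin ?\<beta> = m * sin ?\<omega>" using law_of_sines[OF T] by simp
  have "0 \<le> sin ?\<omega>" using triangle_angle_bounds[OF T] by (simp add: sin_ge_zero)
  have "r / (\<rho> + r) * sqrt ((m - (\<rho> - r)) / (2 * \<rho>)) \<le> r / (\<rho> + r) * sin ?\<omega>"
    using sin_tail_angle_ge[OF assms] assms by (intro mult_left_mono) auto
  also have "\<dots> = sin ?\<omega> * r / (\<rho> + r)"
    by simp
  also have "\<dots> \<le> sin ?\<omega> * (\<rho> + r - m) / (\<rho> + r)"
    using \<open>0 \<le> sin ?\<omega>\<close> assms by (intro divide_right_mono mult_left_mono) auto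
  also have "\<dots> = sin ?\<omega> - sin ?\<beta>"
    using sines assms by (simp add: field_simps)
  also have "\<dots> \<le> ?\<omega> - ?\<beta>"
    using sin_diff_le[of ?\<omega> ?\<beta>] triangle_angle_le[OF T] assms by simp
  finally show ?thesis .
qed

lemma tail_angle_tendsto_zero:
  fixes m :: "'a \<Rightarrow> real"
  assumes r: "0 < r" "r < \<rho>" and lim: "(m \<longlongrightarrow> \<rho> - r) F"
    and sides: "\<forall>\<^sub>F x in F. triangle_sides (m x) (2 * \<rho>) (\<rho> + r)"
  shows "((\<lambda>x. triangle_angle (m x) (2 * \<rho>) (\<rho> + r)) \<longlongrightarrow> 0) F"
proof -
  let ?cos = "\<lambda>m. (m\<^sup>2 + (2 * \<rho>)\<^sup>2 - (\<rho> + r)\<^sup>2) / (2 * m * (2 * \<rho>))"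
  have "((\<lambda>x. ?cos (m x)) \<longlongrightarrow> ?cos (\<rho> - r)) F"
    using lim r by (intro tendsto_intros) auto
  also have "?cos (\<rho> - r) = 1"
    using r by (simp add: field_simps power2_eq_square)
  finally have lim_cos: "((\<lambda>x. ?cos (m x)) \<longlongrightarrow> 1) F" .
  from sides have "\<forall>\<^sub>F x in F. ?cos (m x) \<in> {-1..1}"
    by eventually_elim (metis atLeastAtMost_iff triangle_cos_bounds)
  from continuous_on_tendsto_compose[OF continuous_on_arccos' lim_cos _ this]
  show ?thesis unfolding triangle_angle_def by simp
qed

section \<open>Moving the centre of the last turning circle\<close>

lemma less_of_power2_gap:
  fixes R m a \<rho> :: real
  assumes "0 \<le> R" "0 \<le> m" "m < \<rho>" "R < \<rho>" "0 \<le> a" and gap: "R\<^sup>2 + 2 * \<rho> * a < m\<^sup>2"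
  shows "R + a < m"
proof -
  have "0 \<le> 2 * \<rho> * a" using assms by simp
  with gap have "R < m" using assms(1,2) by (smt (verit) power_mono)
  have "2 * \<rho> * a < (m - R) * (m + R)"
    using gap by (simp add: power2_eq_square algebra_simps)
  also have "\<dots> \<le> (m - R) * (2 * \<rho>)"
    using \<open>R < m\<close> assms(3,4) by (intro mult_left_mono) auto
  finally have "(2 * \<rho>) * a < (2 * \<rho>) * (m - R)" by (simp add: mult_ac)
  then show ?thesis using assms(1,4) by simp
qed

lemma eventually_gt_linear_at_right:
  fixes f :: "real \<Rightarrow> real"
  assumes "(f has_real_derivative D) (at 0)" and "f 0 = 0" and "k < D"
  shows "\<forall>\<^sub>F t in at_right 0. k * t < f t"
proof -
  have "(f has_real_derivative D) (at_right 0)"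
    using assms(1) by (rule has_field_derivative_at_within)
  then have "((\<lambda>t. f t / t) \<longlongrightarrow> D) (at_right 0)"
    using assms(2) by (simp add: has_field_derivative_iff)
  then have "\<forall>\<^sub>F t in at_right 0. k < f t / t"
    using assms(3) by (rule order_tendstoD)
  with eventually_at_right_less[of "0::real"] show ?thesis
    by eventually_elim (simp add: pos_less_divide_eq)
qed

lemma eventually_linear_less_sqrt_at_right:
  fixes C k :: real
  assumes "0 < k"
  shows "\<forall>\<^sub>F t in at_right 0. C * t < k * sqrt t"
proof -
  have "((\<lambda>t. C * sqrt t) \<longlongrightarrow> C * sqrt 0) (at_right 0)"
    by (intro tendsto_intros)
  then have "\<forall>\<^sub>F t in at_right 0. C * sqrt t < k"
    using assms by (intro order_tendstoD) simp_all
  with eventually_at_right_less[of "0::real"] show ?thesis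
  proof eventually_elim
    case (elim t)
    then have "C * sqrt t * sqrt t < k * sqrt t" by (intro mult_strict_right_mono) auto
    with elim show ?case by (simp add: mult.assoc)
  qed
qed

lemma perturbed_radius_growth:
  fixes c V :: complex
  defines "b \<equiv> Re (cnj c * V)"
  assumes "0 < \<rho>" and "b \<noteq> 0"
  shows "\<forall>\<^sub>F t in at_right 0.
    (cmod c)\<^sup>2 + 2 * \<rho> * \<bar>b\<bar> * t < (cmod (c + 2 * \<i> * of_real \<rho> * (cis (- sgn b * t) - 1) * V))\<^sup>2"
proof -
  define a where "a = Im (cnj c * V)"
  define g where "g t = \<bar>b\<bar> * sin t + a * (1 - cos t)" for t
  have "(g has_real_derivative \<bar>b\<bar>) (at 0)"
    unfolding g_def by (auto intro!: derivative_eq_intros)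
  then have ev: "\<forall>\<^sub>F t in at_right 0. \<bar>b\<bar> / 2 * t < g t"
    by (rule eventually_gt_linear_at_right) (use assms(3) in \<open>simp_all add: g_def\<close>)
  have re: "Re (cnj c * (2 * \<i> * of_real \<rho> * (cis (- sgn b * t) - 1) * V)) = 2 * \<rho> * g t" for t
    using assms(3) by (cases "b > 0") (simp_all add: g_def a_def b_def algebra_simps)
  from ev show ?thesis
  proof eventually_elim
    case (elim t)
    have "2 * \<rho> * \<bar>b\<bar> * t < 4 * \<rho> * g t"
      using mult_strict_left_mono[OF elim, of "4 * \<rho>"] assms(2) by (simp add: algebra_simps)
    moreover have "0 \<le> (cmod (2 * \<i> * of_real \<rho> * (cis (- sgn b * t) - 1) * V))\<^sup>2"
      by simp
    ultimately show ?case
      unfolding cmod_add_power2 re by linarith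
  qed
qed

(* The sign of the rotation angle - sgn b * t makes the centre move away from the origin. *)
lemma perturbed_center_eventually:
  fixes \<rho> r E :: real and c V :: complex
  defines "b \<equiv> Re (cnj c * V)"
  defines "p \<equiv> \<lambda>t. c + 2 * \<i> * of_real \<rho> * (cis (- sgn b * t) - 1) * V"
  assumes r: "0 < r" "r < \<rho>" and c: "cmod c = \<rho> - r" and b: "b \<noteq> 0" and E: "0 < E"
  shows "\<forall>\<^sub>F t in at_right 0. \<rho> - r + \<bar>b\<bar> * t < cmod (p t) \<and> cmod (p t) < \<rho> \<and>
    cmod (p t / c - 1) < 1 / 2 \<and> triangle_angle (cmod (p t)) (2 * \<rho>) (\<rho> + r) < E"
proof -
  have "c \<noteq> 0" "0 < \<rho>" using r c by auto
  have lim_p: "(p \<longlongrightarrow> c) (at_right 0)"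
    unfolding p_def by (auto intro!: tendsto_eq_intros)
  then have lim_m: "((\<lambda>t. cmod (p t)) \<longlongrightarrow> \<rho> - r) (at_right 0)"
    using c by (metis tendsto_norm)
  then have less_\<rho>: "\<forall>\<^sub>F t in at_right 0. cmod (p t) < \<rho>"
    by (rule order_tendstoD(2)) (use r in simp)
  have "((\<lambda>t. cmod (p t / c - 1)) \<longlongrightarrow> cmod (c / c - 1)) (at_right 0)"
    using lim_p \<open>c \<noteq> 0\<close> by (intro tendsto_intros)
  then have close: "\<forall>\<^sub>F t in at_right 0. cmod (p t / c - 1) < 1 / 2"
    by (rule order_tendstoD(2)) (use \<open>c \<noteq> 0\<close> in simp)
  from perturbed_radius_growth[of \<rho> c V, OF \<open>0 < \<rho>\<close> b[unfolded b_def]] less_\<rho>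
    eventually_at_right_less[of "0::real"]
  have grow: "\<forall>\<^sub>F t in at_right 0. \<rho> - r + \<bar>b\<bar> * t < cmod (p t)"
  proof eventually_elim
    case (elim t)
    show ?case
    proof (rule less_of_power2_gap)
      show "(\<rho> - r)\<^sup>2 + 2 * \<rho> * (\<bar>b\<bar> * t) < (cmod (p t))\<^sup>2"
        using elim(1) c by (simp add: b_def p_def mult.assoc)
    qed (use elim r in auto)
  qed
  from grow less_\<rho> eventually_at_right_less[of "0::real"]
  have "\<forall>\<^sub>F t in at_right 0. triangle_sides (cmod (p t)) (2 * \<rho>) (\<rho> + r)"
  proof eventually_elim
    case (elim t)
    then have "0 \<le> \<bar>b\<bar> * t" by simp
    then show ?case by (intro tail_triangle_sides) (use elim r in linarith)+
  qed
  from tail_angle_tendsto_zero[OF r lim_m this]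
  have "\<forall>\<^sub>F t in at_right 0. triangle_angle (cmod (p t)) (2 * \<rho>) (\<rho> + r) < E"
    by (rule order_tendstoD(2)) (use E in simp)
  with grow less_\<rho> close show ?thesis
    by eventually_elim blast
qed

lemma perturbed_direction_bound:
  fixes \<rho> \<tau> R :: real and c V :: complex
  defines "w \<equiv> (c + 2 * \<i> * of_real \<rho> * (cis \<tau> - 1) * V) / c"
  assumes "cmod c = R" "0 < R" "0 \<le> \<rho>" and "cmod (w - 1) < 1 / 2"
  shows "\<bar>arctan (Im w / Re w)\<bar> \<le> 4 * \<rho> * cmod V / R * \<bar>\<tau>\<bar>"
proof -
  have "c \<noteq> 0" using assms(2,3) by auto
  then have "w - 1 = 2 * \<i> * of_real \<rho> * (cis \<tau> - 1) * V / c"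
    by (simp add: w_def field_simps)
  then have "cmod (w - 1) = 2 * \<rho> * cmod (cis \<tau> - 1) * cmod V / R"
    using assms(2-4) by (simp add: norm_mult norm_divide)
  also have "\<dots> \<le> 2 * \<rho> * \<bar>\<tau>\<bar> * cmod V / R"
    using norm_cis_minus_one_le[of \<tau>] assms(3,4) by (intro divide_right_mono mult_right_mono mult_left_mono) auto
  finally have "2 * cmod (w - 1) \<le> 4 * \<rho> * cmod V / R * \<bar>\<tau>\<bar>"
    using assms(3) by (simp add: field_simps)
  with abs_arctan_ratio_le(2)[OF assms(5)] show ?thesis by (rule order_trans)
qed

lemma perturbed_center_exists:
  fixes \<rho> r E :: real and c V :: complex
  defines "b \<equiv> Re (cnj c * V)"
  defines "p \<equiv> \<lambda>t. c + 2 * \<i> * of_real \<rho> * (cis (- sgn b * t) - 1) * V"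
  assumes r: "0 < r" "r < \<rho>" and c: "cmod c = \<rho> - r" and b: "b \<noteq> 0" and E: "0 < E"
  obtains t where "0 < t" "\<rho> - r + \<bar>b\<bar> * t < cmod (p t)" "cmod (p t) < \<rho>" "cmod (p t / c - 1) < 1 / 2"
    "triangle_angle (cmod (p t)) (2 * \<rho>) (\<rho> + r) < E"
    "(2 + 4 * \<rho> * cmod V / (\<rho> - r)) * t < r / (\<rho> + r) * sqrt (\<bar>b\<bar> / (2 * \<rho>)) * sqrt t"
proof -
  have "0 < r / (\<rho> + r) * sqrt (\<bar>b\<bar> / (2 * \<rho>))" using r b by simp
  from perturbed_center_eventually[of r \<rho> c V E, folded b_def, OF r c b E]
    eventually_linear_less_sqrt_at_right[OF this, of "2 + 4 * \<rho> * cmod V / (\<rho> - r)"]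
    eventually_at_right_less[of "0::real"]
  have "\<forall>\<^sub>F t in at_right 0. (\<rho> - r + \<bar>b\<bar> * t < cmod (p t) \<and> cmod (p t) < \<rho> \<and>
      cmod (p t / c - 1) < 1 / 2 \<and> triangle_angle (cmod (p t)) (2 * \<rho>) (\<rho> + r) < E) \<and>
      (2 + 4 * \<rho> * cmod V / (\<rho> - r)) * t < r / (\<rho> + r) * sqrt (\<bar>b\<bar> / (2 * \<rho>)) * sqrt t \<and> 0 < t"
    unfolding p_def by eventually_elim simp
  with eventually_happens[of _ "at_right (0::real)"] that show thesis by auto
qed

lemma perturbed_tail:
  fixes \<rho> r \<phi> E :: real and V :: complex
  assumes r: "0 < r" "r < \<rho>" and V: "Re (cnj (\<i> * cis \<phi>) * V) \<noteq> 0" and E: "0 < E"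
  obtains \<tau> \<delta> \<omega> \<beta> where "\<omega> < E" and "0 \<le> \<beta>" and "2 * \<bar>\<tau>\<bar> + \<bar>\<delta>\<bar> < \<omega> - \<beta>"
    and "\<i> * of_real (\<rho> - r) * cis \<phi> + 2 * \<i> * of_real \<rho> * (cis \<tau> - 1) * V
        - 2 * \<i> * of_real \<rho> * cis (\<phi> + \<delta> - \<omega>) + \<i> * of_real \<rho> * cis (\<phi> + \<delta> - \<omega> - \<beta>)
      = - of_real r * \<i> * cis (\<phi> + \<delta> - \<omega> - \<beta>)"
proof -
  define c where "c = \<i> * of_real (\<rho> - r) * cis \<phi>"
  define b where "b = Re (cnj c * V)"
  define p where "p t = c + 2 * \<i> * of_real \<rho> * (cis (- sgn b * t) - 1) * V" for t
  have c: "cmod c = \<rho> - r" using r by (simp add: c_def norm_mult del: of_real_diff)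
  have "b = (\<rho> - r) * Re (cnj (\<i> * cis \<phi>) * V)" by (simp add: b_def c_def algebra_simps)
  then have "b \<noteq> 0" using V r by simp
  obtain t where t: "0 < t" "\<rho> - r + \<bar>b\<bar> * t < cmod (p t)" "cmod (p t) < \<rho>" "cmod (p t / c - 1) < 1 / 2"
    "triangle_angle (cmod (p t)) (2 * \<rho>) (\<rho> + r) < E"
    "(2 + 4 * \<rho> * cmod V / (\<rho> - r)) * t < r / (\<rho> + r) * sqrt (\<bar>b\<bar> / (2 * \<rho>)) * sqrt t"
    using perturbed_center_exists[of r \<rho> c V E, folded b_def] r c \<open>b \<noteq> 0\<close> E unfolding p_def by blast
  define \<tau> where "\<tau> = - sgn b * t"
  define m where "m = cmod (p t)"
  define \<delta> where "\<delta> = arctan (Im (p t / c) / Re (p t / c))"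
  define \<omega> where "\<omega> = triangle_angle m (2 * \<rho>) (\<rho> + r)"
  define \<beta> where "\<beta> = triangle_angle (2 * \<rho>) (\<rho> + r) m"
  have \<tau>: "\<bar>\<tau>\<bar> = t" using t(1) \<open>b \<noteq> 0\<close> by (simp add: \<tau>_def abs_mult)
  have "0 \<le> \<bar>b\<bar> * t" using t(1) by simp
  then have m: "\<rho> - r < m" "m \<le> \<rho>" using t(2,3) by (auto simp: m_def)
  note T = tail_triangle_sides[OF r m]
  (* the extra turning 2 |tau| + |delta| is O(t), the saved turning omega - beta is of order sqrt t *)
  have "\<bar>\<delta>\<bar> \<le> 4 * \<rho> * cmod V / (\<rho> - r) * t"
    using perturbed_direction_bound[OF c, of \<rho> \<tau> V] r t(4) \<tau> by (simp add: \<delta>_def p_def \<tau>_def)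
  then have "2 * \<bar>\<tau>\<bar> + \<bar>\<delta>\<bar> \<le> (2 + 4 * \<rho> * cmod V / (\<rho> - r)) * t"
    using \<tau> by (simp add: algebra_simps)
  also have "\<dots> < r / (\<rho> + r) * sqrt (\<bar>b\<bar> / (2 * \<rho>)) * sqrt t" by (fact t(6))
  also have "\<dots> = r / (\<rho> + r) * sqrt (\<bar>b\<bar> * t / (2 * \<rho>))"
    by (simp add: mult.commute flip: real_sqrt_mult)
  also have "\<dots> \<le> r / (\<rho> + r) * sqrt ((m - (\<rho> - r)) / (2 * \<rho>))"
    using t(2) r by (intro mult_left_mono real_sqrt_le_mono divide_right_mono) (auto simp: m_def)
  also have "\<dots> \<le> \<omega> - \<beta>"
    unfolding \<omega>_def \<beta>_def using r m by (rule tail_angle_gain)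
  finally have gain: "2 * \<bar>\<tau>\<bar> + \<bar>\<delta>\<bar> < \<omega> - \<beta>" .
  have "p t = \<i> * of_real m * cis (\<phi> + \<delta>)"
    unfolding m_def \<delta>_def using r abs_arctan_ratio_le(1)[OF t(4)] by (intro polar_relative_to[OF c_def]) auto
  then have "p t - 2 * \<i> * of_real \<rho> * cis (\<phi> + \<delta> - \<omega>) + \<i> * of_real \<rho> * cis (\<phi> + \<delta> - \<omega> - \<beta>)
      = - of_real r * \<i> * cis (\<phi> + \<delta> - \<omega> - \<beta>)"
    using tail_to_target[OF T, of "\<phi> + \<delta>"] by (simp add: \<omega>_def \<beta>_def)
  moreover have "\<omega> < E" using t(5) by (simp add: \<omega>_def m_def)
  moreover have "0 \<le> \<beta>" using triangle_angle_bounds[OF triangle_sides_rotate[OF T]] by (simp add: \<beta>_def)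
  ultimately show thesis
    using that[of \<omega> \<beta> \<tau> \<delta>] gain by (simp add: p_def c_def \<tau>_def)
qed

section \<open>Shortening LRL paths\<close>

lemma shortcut_full_turn:
  assumes "0 < \<rho>" and "v = 1 \<or> v = -1" and "0 \<le> d"
    and "\<forall>(v, d)\<in>set (ps @ (v, d + 2 * pi * \<rho>) # qs). \<bar>v\<bar> \<le> 1 \<and> 0 \<le> d"
    and "0 < seg_duration (ps @ (v, d) # qs)"
    and "Complex x0 y0 + seg_displacement \<rho> \<theta>0 (ps @ (v, d + 2 * pi * \<rho>) # qs)
      = - of_real r * \<i> * cis (\<theta>0 + seg_turn \<rho> (ps @ (v, d + 2 * pi * \<rho>) # qs))"
  shows "\<exists>T u X Y \<Theta>. feasible \<rho> r x0 y0 \<theta>0 T u X Y \<Theta> \<and> T < seg_duration (ps @ (v, d + 2 * pi * \<rho>) # qs)"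
proof -
  have "\<rho> \<noteq> 0" "v \<in> \<int>" using assms(1,2) by auto
  have cis_shift: "cis (x + 2 * pi * v) = cis x" for x
    using \<open>v \<in> \<int>\<close> cis_mult[of x "2 * pi * v"] by simp
  have turn: "\<theta>0 + seg_turn \<rho> (ps @ (v, d + 2 * pi * \<rho>) # qs) = \<theta>0 + seg_turn \<rho> (ps @ (v, d) # qs) + 2 * pi * v"
    using seg_full_turn(2)[OF assms(2) \<open>\<rho> \<noteq> 0\<close>] by simp
  have "\<exists>u X Y \<Theta>. feasible \<rho> r x0 y0 \<theta>0 (seg_duration (ps @ (v, d) # qs)) u X Y \<Theta>"
  proof (rule seg_feasible)
    from assms(6)[unfolded seg_full_turn(1)[OF assms(2) \<open>\<rho> \<noteq> 0\<close>] turn cis_shift]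
    show "Complex x0 y0 + seg_displacement \<rho> \<theta>0 (ps @ (v, d) # qs)
        = - of_real r * \<i> * cis (\<theta>0 + seg_turn \<rho> (ps @ (v, d) # qs))" .
  qed (use assms in auto)
  moreover have "seg_duration (ps @ (v, d) # qs) < seg_duration (ps @ (v, d + 2 * pi * \<rho>) # qs)"
    using assms(1) by simp
  ultimately show ?thesis by blast
qed

(* The endpoint condition expresses the final position through the centres of the four
   turning circles; the left circle at position z and heading theta has centre
   z + i rho e^(i theta). *)
lemma LRLR_feasible:
  assumes "0 < \<rho>" and "\<theta>0 < \<psi>1" "\<psi>2 \<le> \<psi>1" "\<psi>2 \<le> \<psi>3" "\<psi>4 \<le> \<psi>3"
    and "Complex x0 y0 + \<i> * of_real \<rho> * cis \<theta>0 - 2 * \<i> * of_real \<rho> * cis \<psi>1 + 2 * \<i> * of_real \<rho> * cis \<psi>2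
      - 2 * \<i> * of_real \<rho> * cis \<psi>3 + \<i> * of_real \<rho> * cis \<psi>4 = - of_real r * \<i> * cis \<psi>4"
  shows "\<exists>u X Y \<Theta>. feasible \<rho> r x0 y0 \<theta>0 (\<rho> * ((\<psi>1 - \<theta>0) + (\<psi>1 - \<psi>2) + (\<psi>3 - \<psi>2) + (\<psi>3 - \<psi>4))) u X Y \<Theta>"
proof -
  let ?ps = "[(1, \<rho> * (\<psi>1 - \<theta>0)), (-1, \<rho> * (\<psi>1 - \<psi>2)), (1, \<rho> * (\<psi>3 - \<psi>2)), (-1, \<rho> * (\<psi>3 - \<psi>4))]"
  have disp: "seg_displacement \<rho> \<theta>0 ?ps = \<i> * of_real \<rho> * cis \<theta>0 - 2 * \<i> * of_real \<rho> * cis \<psi>1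
      + 2 * \<i> * of_real \<rho> * cis \<psi>2 - 2 * \<i> * of_real \<rho> * cis \<psi>3 + \<i> * of_real \<rho> * cis \<psi>4"
    using assms(1) by (simp add: arc_displacement_left arc_displacement_right) (simp add: algebra_simps)
  have turn: "\<theta>0 + seg_turn \<rho> ?ps = \<psi>4" using assms(1) by simp
  have "Complex x0 y0 + seg_displacement \<rho> \<theta>0 ?ps = - of_real r * \<i> * cis (\<theta>0 + seg_turn \<rho> ?ps)"
    unfolding disp turn using assms(6) by (simp add: algebra_simps)
  moreover have "seg_duration ?ps = \<rho> * ((\<psi>1 - \<theta>0) + (\<psi>1 - \<psi>2) + (\<psi>3 - \<psi>2) + (\<psi>3 - \<psi>4))"
    by (simp add: algebra_simps)
  moreover have "0 < \<rho> * ((\<psi>1 - \<theta>0) + (\<psi>1 - \<psi>2) + (\<psi>3 - \<psi>2) + (\<psi>3 - \<psi>4))"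
    using assms(1-5) by simp
  ultimately show ?thesis
    using seg_feasible[of \<rho> ?ps x0 y0 \<theta>0 r] assms(1-5) by simp
qed

lemma LRL_seg_displacement:
  assumes "\<rho> \<noteq> 0"
  shows "seg_displacement \<rho> \<theta>0 [(1, d1), (-1, d2), (1, d3)] = \<i> * of_real \<rho> * cis \<theta>0
      - 2 * \<i> * of_real \<rho> * cis (\<theta>0 + d1 / \<rho>) + 2 * \<i> * of_real \<rho> * cis (\<theta>0 + d1 / \<rho> - d2 / \<rho>)
      - \<i> * of_real \<rho> * cis (\<theta>0 + d1 / \<rho> - d2 / \<rho> + d3 / \<rho>)"
  by (simp add: arc_displacement_left arc_displacement_right algebra_simps)

lemma shortcut_perturb_middle_arc:
  assumes r: "0 < r" "r < \<rho>"
    and \<phi>: "\<theta>0 < \<phi>1" "\<phi>2 < \<phi>1" "\<phi>2 < \<phi>f" "\<phi>f < \<phi>2 + 2 * pi" "\<phi>f \<noteq> \<phi>2 + pi"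
    and centers: "Complex x0 y0 + \<i> * of_real \<rho> * cis \<theta>0 - 2 * \<i> * of_real \<rho> * cis \<phi>1
      + 2 * \<i> * of_real \<rho> * cis \<phi>2 = \<i> * of_real (\<rho> - r) * cis \<phi>f"
  shows "\<exists>T u X Y \<Theta>. feasible \<rho> r x0 y0 \<theta>0 T u X Y \<Theta> \<and> T < \<rho> * ((\<phi>1 - \<theta>0) + (\<phi>1 - \<phi>2) + (\<phi>f - \<phi>2))"
proof -
  have "0 < \<rho>" using r by linarith
  have "sin (\<phi>f - \<phi>2) \<noteq> 0" using \<phi> by (intro sin_nonzero_between) auto
  then have V: "Re (cnj (\<i> * cis \<phi>f) * cis \<phi>2) \<noteq> 0"
    by (metis Re_cnj_i_cis_mult_cis minus_diff_eq neg_equal_0_iff_equal sin_minus)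
  define E where "E = min ((\<phi>f - \<phi>2) / 3) (\<phi>1 - \<phi>2)"
  have "0 < E" using \<phi> by (simp add: E_def)
  obtain \<tau> \<delta> \<omega> \<beta> where tail: "\<omega> < E" "0 \<le> \<beta>" "2 * \<bar>\<tau>\<bar> + \<bar>\<delta>\<bar> < \<omega> - \<beta>"
    "\<i> * of_real (\<rho> - r) * cis \<phi>f + 2 * \<i> * of_real \<rho> * (cis \<tau> - 1) * cis \<phi>2
      - 2 * \<i> * of_real \<rho> * cis (\<phi>f + \<delta> - \<omega>) + \<i> * of_real \<rho> * cis (\<phi>f + \<delta> - \<omega> - \<beta>)
      = - of_real r * \<i> * cis (\<phi>f + \<delta> - \<omega> - \<beta>)"
    by (rule perturbed_tail[OF r V \<open>0 < E\<close>])
  have "\<omega> < (\<phi>f - \<phi>2) / 3" "\<omega> < \<phi>1 - \<phi>2" using tail(1) by (simp_all add: E_def)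
  moreover have "\<bar>\<tau>\<bar> < \<omega>" "\<bar>\<delta>\<bar> < \<omega>" using tail(2,3) abs_ge_zero[of \<tau>] abs_ge_zero[of \<delta>] by linarith+
  ultimately have headings: "\<phi>2 + \<tau> \<le> \<phi>1" "\<phi>2 + \<tau> \<le> \<phi>f + \<delta> - \<omega>" "\<phi>f + \<delta> - \<omega> - \<beta> \<le> \<phi>f + \<delta> - \<omega>"
    using tail(2) by (auto simp: abs_less_iff)
  have "Complex x0 y0 + \<i> * of_real \<rho> * cis \<theta>0 - 2 * \<i> * of_real \<rho> * cis \<phi>1
      + 2 * \<i> * of_real \<rho> * cis (\<phi>2 + \<tau>)
    = \<i> * of_real (\<rho> - r) * cis \<phi>f + 2 * \<i> * of_real \<rho> * (cis \<tau> - 1) * cis \<phi>2"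
    using centers by (simp add: algebra_simps flip: cis_mult)
  with tail(4) have "Complex x0 y0 + \<i> * of_real \<rho> * cis \<theta>0 - 2 * \<i> * of_real \<rho> * cis \<phi>1
      + 2 * \<i> * of_real \<rho> * cis (\<phi>2 + \<tau>) - 2 * \<i> * of_real \<rho> * cis (\<phi>f + \<delta> - \<omega>)
      + \<i> * of_real \<rho> * cis (\<phi>f + \<delta> - \<omega> - \<beta>) = - of_real r * \<i> * cis (\<phi>f + \<delta> - \<omega> - \<beta>)"
    by simp
  note feasible = LRLR_feasible[OF \<open>0 < \<rho>\<close> \<phi>(1) headings this]
  have "\<rho> * ((\<phi>1 - \<theta>0) + (\<phi>1 - (\<phi>2 + \<tau>)) + (\<phi>f + \<delta> - \<omega> - (\<phi>2 + \<tau>)) + (\<phi>f + \<delta> - \<omega> - (\<phi>f + \<delta> - \<omega> - \<beta>)))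
    < \<rho> * ((\<phi>1 - \<theta>0) + (\<phi>1 - \<phi>2) + (\<phi>f - \<phi>2))"
    using tail(3) abs_ge_minus_self[of \<tau>] abs_ge_self[of \<delta>] \<open>0 < \<rho>\<close>
    by (intro mult_strict_left_mono) linarith+
  with feasible show ?thesis by blast
qed

lemma shortcut_perturb_first_arc:
  assumes r: "0 < r" "r < \<rho>"
    and \<phi>: "\<theta>0 < \<phi>1" "\<phi>2 < \<phi>1" "\<phi>1 < \<phi>2 + 2 * pi" "\<phi>1 \<noteq> \<phi>2 + pi" "\<phi>f = \<phi>2 + pi"
    and centers: "Complex x0 y0 + \<i> * of_real \<rho> * cis \<theta>0 - 2 * \<i> * of_real \<rho> * cis \<phi>1
      + 2 * \<i> * of_real \<rho> * cis \<phi>2 = \<i> * of_real (\<rho> - r) * cis \<phi>f"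
  shows "\<exists>T u X Y \<Theta>. feasible \<rho> r x0 y0 \<theta>0 T u X Y \<Theta> \<and> T < \<rho> * ((\<phi>1 - \<theta>0) + (\<phi>1 - \<phi>2) + (\<phi>f - \<phi>2))"
proof -
  have "0 < \<rho>" using r by linarith
  have "Re (cnj (\<i> * cis \<phi>f) * (cis \<phi>2 - cis \<phi>1)) = sin (\<phi>2 - \<phi>f) - sin (\<phi>1 - \<phi>f)"
    by (simp add: sin_diff algebra_simps)
  also have "\<dots> = sin (\<phi>1 - \<phi>2)" using \<phi>(5) by (simp add: diff_diff_eq[symmetric])
  finally have V: "Re (cnj (\<i> * cis \<phi>f) * (cis \<phi>2 - cis \<phi>1)) \<noteq> 0"
    using sin_nonzero_between[of "\<phi>1 - \<phi>2"] \<phi> by auto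
  define E where "E = min (pi / 3) (\<phi>1 - \<theta>0)"
  have "0 < E" using \<phi> by (simp add: E_def)
  obtain \<tau> \<delta> \<omega> \<beta> where tail: "\<omega> < E" "0 \<le> \<beta>" "2 * \<bar>\<tau>\<bar> + \<bar>\<delta>\<bar> < \<omega> - \<beta>"
    "\<i> * of_real (\<rho> - r) * cis \<phi>f + 2 * \<i> * of_real \<rho> * (cis \<tau> - 1) * (cis \<phi>2 - cis \<phi>1)
      - 2 * \<i> * of_real \<rho> * cis (\<phi>f + \<delta> - \<omega>) + \<i> * of_real \<rho> * cis (\<phi>f + \<delta> - \<omega> - \<beta>)
      = - of_real r * \<i> * cis (\<phi>f + \<delta> - \<omega> - \<beta>)"
    by (rule perturbed_tail[OF r V \<open>0 < E\<close>])
  have "\<omega> < pi / 3" "\<omega> < \<phi>1 - \<theta>0" using tail(1) by (simp_all add: E_def)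
  moreover have "\<bar>\<tau>\<bar> < \<omega>" "\<bar>\<delta>\<bar> < \<omega>" using tail(2,3) abs_ge_zero[of \<tau>] abs_ge_zero[of \<delta>] by linarith+
  ultimately have headings: "\<theta>0 < \<phi>1 + \<tau>" "\<phi>2 + \<tau> \<le> \<phi>1 + \<tau>" "\<phi>2 + \<tau> \<le> \<phi>f + \<delta> - \<omega>"
    "\<phi>f + \<delta> - \<omega> - \<beta> \<le> \<phi>f + \<delta> - \<omega>"
    using \<phi>(2,5) tail(2) by (auto simp: abs_less_iff)
  have "Complex x0 y0 + \<i> * of_real \<rho> * cis \<theta>0 - 2 * \<i> * of_real \<rho> * cis (\<phi>1 + \<tau>)
      + 2 * \<i> * of_real \<rho> * cis (\<phi>2 + \<tau>)
    = \<i> * of_real (\<rho> - r) * cis \<phi>f + 2 * \<i> * of_real \<rho> * (cis \<tau> - 1) * (cis \<phi>2 - cis \<phi>1)"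
    using centers by (simp add: algebra_simps flip: cis_mult)
  with tail(4) have "Complex x0 y0 + \<i> * of_real \<rho> * cis \<theta>0 - 2 * \<i> * of_real \<rho> * cis (\<phi>1 + \<tau>)
      + 2 * \<i> * of_real \<rho> * cis (\<phi>2 + \<tau>) - 2 * \<i> * of_real \<rho> * cis (\<phi>f + \<delta> - \<omega>)
      + \<i> * of_real \<rho> * cis (\<phi>f + \<delta> - \<omega> - \<beta>) = - of_real r * \<i> * cis (\<phi>f + \<delta> - \<omega> - \<beta>)"
    by simp
  note feasible = LRLR_feasible[OF \<open>0 < \<rho>\<close> headings this]
  have "\<rho> * ((\<phi>1 + \<tau> - \<theta>0) + (\<phi>1 + \<tau> - (\<phi>2 + \<tau>)) + (\<phi>f + \<delta> - \<omega> - (\<phi>2 + \<tau>))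
      + (\<phi>f + \<delta> - \<omega> - (\<phi>f + \<delta> - \<omega> - \<beta>)))
    < \<rho> * ((\<phi>1 - \<theta>0) + (\<phi>1 - \<phi>2) + (\<phi>f - \<phi>2))"
    using tail(3) abs_ge_zero[of \<tau>] abs_ge_self[of \<delta>] \<open>0 < \<rho>\<close>
    by (intro mult_strict_left_mono) linarith+
  with feasible show ?thesis by blast
qed

(* Here every perturbation of the first two arcs moves the last centre tangentially to the
   circle |z| = rho - r, so an explicit shorter path is used instead. *)
lemma shortcut_half_turns:
  assumes r: "0 < r" "r < \<rho>" and \<phi>: "\<theta>0 < \<phi>1" "\<phi>2 = \<phi>1 - pi" "\<phi>f = \<phi>1"
    and centers: "Complex x0 y0 + \<i> * of_real \<rho> * cis \<theta>0 - 2 * \<i> * of_real \<rho> * cis \<phi>1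
      + 2 * \<i> * of_real \<rho> * cis \<phi>2 = \<i> * of_real (\<rho> - r) * cis \<phi>f"
  shows "\<exists>T u X Y \<Theta>. feasible \<rho> r x0 y0 \<theta>0 T u X Y \<Theta> \<and> T < \<rho> * ((\<phi>1 - \<theta>0) + (\<phi>1 - \<phi>2) + (\<phi>f - \<phi>2))"
proof -
  have "0 < \<rho>" using r by linarith
  let ?ps = "[(1, \<rho> * (\<phi>1 - \<theta>0)), (-1, pi * \<rho> / 2), (0, 2 * \<rho> - 2 * r), (-1, pi * \<rho> / 2)]"
  let ?C = "cis \<phi>1"
  have cis: "cis \<phi>2 = - ?C" "cis \<phi>f = ?C" "cis (\<phi>1 - pi / 2) = - \<i> * ?C" "cis (\<phi>1 - pi) = - ?C"
    using \<phi> by (simp_all add: complex_eq_iff cos_diff sin_diff)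
  have start: "Complex x0 y0 = \<i> * of_real (5 * \<rho> - r) * ?C - \<i> * of_real \<rho> * cis \<theta>0"
    using centers unfolding cis by (simp add: algebra_simps)
  have disp: "seg_displacement \<rho> \<theta>0 ?ps = \<i> * of_real \<rho> * (cis \<theta>0 - ?C) + \<i> * of_real \<rho> * (- \<i> * ?C - ?C)
      + of_real (2 * \<rho> - 2 * r) * (- \<i> * ?C) + \<i> * of_real \<rho> * (- ?C + \<i> * ?C)"
    using \<open>0 < \<rho>\<close> cis
    by (simp add: arc_displacement_left arc_displacement_right arc_displacement_straight diff_diff_eq)
  have turn: "\<theta>0 + seg_turn \<rho> ?ps = \<phi>1 - pi" using \<open>0 < \<rho>\<close> by simp
  have "Complex x0 y0 + seg_displacement \<rho> \<theta>0 ?ps = - of_real r * \<i> * cis (\<theta>0 + seg_turn \<rho> ?ps)"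
    unfolding disp turn cis(4) start by (simp add: algebra_simps)
  moreover have "0 < seg_duration ?ps"
    using r mult_pos_pos[OF \<open>0 < \<rho>\<close>, of "\<phi>1 - \<theta>0"] mult_pos_pos[OF pi_gt_zero \<open>0 < \<rho>\<close>] \<phi>(1)
    unfolding seg_duration.simps by linarith
  ultimately have "\<exists>u X Y \<Theta>. feasible \<rho> r x0 y0 \<theta>0 (seg_duration ?ps) u X Y \<Theta>"
    by (intro seg_feasible) (use r \<phi>(1) \<open>0 < \<rho>\<close> in auto)
  moreover have "\<rho> * ((\<phi>1 - \<theta>0) + (\<phi>1 - \<phi>2) + (\<phi>f - \<phi>2)) = \<rho> * (\<phi>1 - \<theta>0) + 2 * (pi * \<rho>)"
    unfolding \<phi>(2,3) by (simp add: algebra_simps)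
  then have "seg_duration ?ps < \<rho> * ((\<phi>1 - \<theta>0) + (\<phi>1 - \<phi>2) + (\<phi>f - \<phi>2))"
    using mult_strict_right_mono[OF pi_gt3 \<open>0 < \<rho>\<close>] r unfolding seg_duration.simps by linarith
  ultimately show ?thesis by blast
qed

lemma LRL_centers_shortcut:
  assumes r: "0 < r" "r < \<rho>"
    and \<phi>: "\<theta>0 < \<phi>1" "\<phi>2 < \<phi>1" "\<phi>1 < \<phi>2 + 2 * pi" "\<phi>2 < \<phi>f" "\<phi>f < \<phi>2 + 2 * pi"
    and centers: "Complex x0 y0 + \<i> * of_real \<rho> * cis \<theta>0 - 2 * \<i> * of_real \<rho> * cis \<phi>1
      + 2 * \<i> * of_real \<rho> * cis \<phi>2 = \<i> * of_real (\<rho> - r) * cis \<phi>f"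
  shows "\<exists>T u X Y \<Theta>. feasible \<rho> r x0 y0 \<theta>0 T u X Y \<Theta> \<and> T < \<rho> * ((\<phi>1 - \<theta>0) + (\<phi>1 - \<phi>2) + (\<phi>f - \<phi>2))"
proof (cases "\<phi>f = \<phi>2 + pi")
  case False
  with shortcut_perturb_middle_arc[OF r \<phi>(1,2,4,5) _ centers] show ?thesis by blast
next
  case True
  show ?thesis
  proof (cases "\<phi>1 = \<phi>2 + pi")
    case False
    with shortcut_perturb_first_arc[OF r \<phi>(1-3) _ True centers] show ?thesis by blast
  next
    case half: True
    from \<open>\<phi>f = \<phi>2 + pi\<close> half have "\<phi>2 = \<phi>1 - pi" "\<phi>f = \<phi>1" by simp_all
    from shortcut_half_turns[OF r \<phi>(1) this centers] show ?thesis .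
  qed
qed

lemma LRL_internally_tangent_shortcut:
  assumes r: "0 < r" "r < \<rho>" and d: "0 < d1" "0 < d2" "0 < d3"
    and hit: "Complex x0 y0 + seg_displacement \<rho> \<theta>0 [(1, d1), (-1, d2), (1, d3)]
      = - of_real r * \<i> * cis (\<theta>0 + seg_turn \<rho> [(1, d1), (-1, d2), (1, d3)])"
  shows "\<exists>T u X Y \<Theta>. feasible \<rho> r x0 y0 \<theta>0 T u X Y \<Theta> \<and> T < d1 + d2 + d3"
proof -
  have "0 < \<rho>" "\<rho> \<noteq> 0" using r by auto
  consider "2 * pi * \<rho> \<le> d3" | "2 * pi * \<rho> \<le> d2" | "d2 < 2 * pi * \<rho>" "d3 < 2 * pi * \<rho>"
    by linarith
  then show ?thesis
  proof cases
    case 1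
    with shortcut_full_turn[OF \<open>0 < \<rho>\<close>, of 1 "d3 - 2 * pi * \<rho>" "[(1, d1), (-1, d2)]" "[]"] hit d
    show ?thesis by (simp add: add.assoc)
  next
    case 2
    with shortcut_full_turn[OF \<open>0 < \<rho>\<close>, of "-1" "d2 - 2 * pi * \<rho>" "[(1, d1)]" "[(1, d3)]"] hit d
    show ?thesis by (simp add: add.assoc)
  next
    case 3
    define \<phi>1 where "\<phi>1 = \<theta>0 + d1 / \<rho>"
    define \<phi>2 where "\<phi>2 = \<phi>1 - d2 / \<rho>"
    define \<phi>f where "\<phi>f = \<phi>2 + d3 / \<rho>"
    have "Complex x0 y0 + \<i> * of_real \<rho> * cis \<theta>0 - 2 * \<i> * of_real \<rho> * cis \<phi>1
        + 2 * \<i> * of_real \<rho> * cis \<phi>2 = \<i> * of_real (\<rho> - r) * cis \<phi>f"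
      using hit[unfolded LRL_seg_displacement[OF \<open>\<rho> \<noteq> 0\<close>]] by (simp add: \<phi>1_def \<phi>2_def \<phi>f_def algebra_simps)
    moreover have "\<theta>0 < \<phi>1" "\<phi>2 < \<phi>1" "\<phi>1 < \<phi>2 + 2 * pi" "\<phi>2 < \<phi>f" "\<phi>f < \<phi>2 + 2 * pi"
      using d 3 \<open>0 < \<rho>\<close> by (simp_all add: \<phi>1_def \<phi>2_def \<phi>f_def pos_divide_less_eq)
    moreover have "\<rho> * ((\<phi>1 - \<theta>0) + (\<phi>1 - \<phi>2) + (\<phi>f - \<phi>2)) = d1 + d2 + d3"
      using \<open>0 < \<rho>\<close> by (simp add: \<phi>1_def \<phi>2_def \<phi>f_def algebra_simps)
    ultimately show ?thesis using LRL_centers_shortcut[OF r] by metis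
  qed
qed

lemma CCC_control_segments:
  assumes "CCC_control s t1 t2 tf u"
  shows "seg_duration [(s, t1), (-s, t2 - t1), (s, tf - t2)] = tf"
    and "\<forall>(v, d)\<in>set [(s, t1), (-s, t2 - t1), (s, tf - t2)]. 0 \<le> d"
    and "\<forall>t\<in>{0..<tf}. u t = seg_control [(s, t1), (-s, t2 - t1), (s, tf - t2)] t"
  using assms by (auto simp: CCC_control_def)

lemma internally_tangent_endpoint:
  assumes "0 < r" "r < \<rho>" and "x\<^sup>2 + y\<^sup>2 = r\<^sup>2" and "x * cos \<theta> + y * sin \<theta> = 0"
    and "norm (turn_center \<rho> 1 x y \<theta>) = \<rho> - r"
  shows "Complex x y = - of_real r * \<i> * cis \<theta>"
proof -
  define l where "l = y * cos \<theta> - x * sin \<theta>"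
  have "cos \<theta> * (x * cos \<theta> + y * sin \<theta>) - l * sin \<theta> = x * ((sin \<theta>)\<^sup>2 + (cos \<theta>)\<^sup>2)"
    "sin \<theta> * (x * cos \<theta> + y * sin \<theta>) + l * cos \<theta> = y * ((sin \<theta>)\<^sup>2 + (cos \<theta>)\<^sup>2)"
    unfolding l_def by algebra+
  then have xy: "x = - l * sin \<theta>" "y = l * cos \<theta>" using assms(4) by simp_all
  have "l\<^sup>2 = r\<^sup>2"
    using assms(3) unfolding xy by (simp add: power_mult_distrib flip: distrib_left)
  moreover have "turn_center \<rho> 1 x y \<theta> = (- ((l + \<rho>) * sin \<theta>), (l + \<rho>) * cos \<theta>)"
    by (simp add: turn_center_def xy algebra_simps)
  then have "\<bar>l + \<rho>\<bar> = \<rho> - r"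
    using assms(5) by (simp add: norm_Pair power_mult_distrib flip: distrib_left)
  ultimately have "l = - r" using assms(1,2) by (auto simp: power2_eq_iff abs_if split: if_splits)
  then show ?thesis by (simp add: complex_eq_iff xy)
qed

lemma LRL_trajectory_shortcut:
  assumes r: "0 < r" "r < \<rho>" and F: "feasible \<rho> r x0 y0 \<theta>0 tf u X Y \<Theta>"
    and C: "CCC_control 1 t1 t2 tf u" and N: "norm (turn_center \<rho> 1 (X tf) (Y tf) (\<Theta> tf)) = \<rho> - r"
  shows "\<exists>T u X Y \<Theta>. feasible \<rho> r x0 y0 \<theta>0 T u X Y \<Theta> \<and> T < tf"
proof -
  let ?ps = "[(1, t1), (-1, t2 - t1), (1, tf - t2)]"
  have t: "0 < t1" "t1 < t2" "t2 < tf" using C by (simp_all add: CCC_control_def)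
  note segs = CCC_control_segments[OF C]
  have u: "\<forall>t\<in>{0..<seg_duration ?ps}. u t = seg_control ?ps t" unfolding segs(1) by (fact segs(3))
  from F have adm: "admissible \<rho> x0 y0 \<theta>0 (seg_duration ?ps) u X Y \<Theta>"
    and target: "(X tf)\<^sup>2 + (Y tf)\<^sup>2 = r\<^sup>2" "X tf * cos (\<Theta> tf) + Y tf * sin (\<Theta> tf) = 0"
    unfolding segs(1) feasible_def by simp_all
  note endpoint = admissible_seg_endpoint[OF adm _ segs(2) u, unfolded segs(1)]
  have "Complex (X tf) (Y tf) = - of_real r * \<i> * cis (\<Theta> tf)"
    using internally_tangent_endpoint[OF r target N] .
  then have "Complex x0 y0 + seg_displacement \<rho> \<theta>0 ?ps = - of_real r * \<i> * cis (\<theta>0 + seg_turn \<rho> ?ps)"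
    using endpoint r by simp
  from LRL_internally_tangent_shortcut[OF r _ _ _ this] t show ?thesis by simp
qed

lemma feasible_reflect:
  assumes "feasible \<rho> r x0 y0 \<theta>0 T u X Y \<Theta>"
  shows "feasible \<rho> r x0 (- y0) (- \<theta>0) T (\<lambda>t. - u t) X (\<lambda>t. - Y t) (\<lambda>t. - \<Theta> t)"
proof -
  have "admissible \<rho> x0 (- y0) (- \<theta>0) T (\<lambda>t. - u t) X (\<lambda>t. - Y t) (\<lambda>t. - \<Theta> t)"
    using assms by (auto simp: feasible_def admissible_def integrable_neg)
  moreover have "(X T)\<^sup>2 + (- Y T)\<^sup>2 = r\<^sup>2" "X T * cos (- \<Theta> T) + (- Y T) * sin (- \<Theta> T) = 0"
    using assms by (simp_all add: feasible_def)
  ultimately show ?thesis by (simp add: feasible_def)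
qed

lemma CCC_control_reflect: "CCC_control s t1 t2 tf u \<Longrightarrow> CCC_control (- s) t1 t2 tf (\<lambda>t. - u t)"
  by (auto simp: CCC_control_def)

lemma norm_turn_center_reflect: "norm (turn_center \<rho> s x (- y) (- \<theta>)) = norm (turn_center \<rho> (- s) x y \<theta>)"
  by (simp add: turn_center_def norm_Pair power2_eq_square algebra_simps)

theorem lemma5:
  fixes \<rho> r x0 y0 \<theta>0 tf t1 t2 s :: real
    and u X Y \<Theta> :: "real \<Rightarrow> real"
  assumes "\<rho> > r" and "r > 0" and "\<theta>0 \<in> {0..2*pi}"
    and "feasible \<rho> r x0 y0 \<theta>0 tf u X Y \<Theta>"
    and "CCC_control s t1 t2 tf u"
    and "norm (turn_center \<rho> s (X tf) (Y tf) (\<Theta> tf)) = \<rho> - r"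
  shows "\<not> optimal \<rho> r x0 y0 \<theta>0 tf u X Y \<Theta>"
proof
  (* the range of theta0 is irrelevant: headings only enter through cos and sin *)
  assume opt: "optimal \<rho> r x0 y0 \<theta>0 tf u X Y \<Theta>"
  have r: "0 < r" "r < \<rho>" using assms(1,2) by auto
  have "s = 1 \<or> s = -1" using assms(5) by (simp add: CCC_control_def)
  then have "\<exists>T u X Y \<Theta>. feasible \<rho> r x0 y0 \<theta>0 T u X Y \<Theta> \<and> T < tf"
  proof
    assume "s = 1"
    with assms(4-6) show ?thesis by (intro LRL_trajectory_shortcut[OF r]) auto
  next
    assume "s = -1"
    have "\<exists>T u X Y \<Theta>. feasible \<rho> r x0 (- y0) (- \<theta>0) T u X Y \<Theta> \<and> T < tf"
    proof (rule LRL_trajectory_shortcut[OF r feasible_reflect[OF assms(4)]])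
      show "CCC_control 1 t1 t2 tf (\<lambda>t. - u t)"
        using CCC_control_reflect[OF assms(5)] \<open>s = -1\<close> by simp
      show "norm (turn_center \<rho> 1 (X tf) (- Y tf) (- \<Theta> tf)) = \<rho> - r"
        using norm_turn_center_reflect[of \<rho> 1] assms(6) \<open>s = -1\<close> by simp
    qed
    then obtain T u' X' Y' \<Theta>' where "feasible \<rho> r x0 (- y0) (- \<theta>0) T u' X' Y' \<Theta>'" "T < tf"
      by blast
    with feasible_reflect[OF this(1)] show ?thesis unfolding minus_minus by blast
  qed
  with opt show False unfolding optimal_def by force
qed

end
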